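(* Let $A$ be a real $2\times 2$ matrix and $B$ a real $1\times 2$ matrix, and let $\mathrm{NT}=\{\vec{x}\in\mathbb{R}^2 : BA^k\vec{x}>0 \text{ for all integers } k\ge 0\}$. Suppose $A$ has a positive eigenvalue $\lambda_1$ and a negative eigenvalue $\lambda_2$ with $\lambda_1<|\lambda_2|$, and eigenvectors $\vec{\beta}_1,\vec{\beta}_2$ for $\lambda_1,\lambda_2$ respectively, with $B\vec{\beta}_1>0$ and $B\vec{\beta}_2>0$. Then $\mathrm{NT}=\{k\vec{\beta}_1: k>0\}$.
   Context: $\mathrm{NT}$ is the non-termination set of the loop "while $(B\vec{x}>0)$ $\{\vec{x}:=A\vec{x}\}$". *)

theory Defs
  imports "HOL-Analysis.Analysis"
begin

text \<open>Non-termination set of the loop  while (B x > 0) { x := A x }.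
  B is a real 1x2 matrix, represented as its single row b (so B x = b \<bullet> x);
  A^k is the k-th matrix power.\<close>
primrec matpow :: "real^2^2 \<Rightarrow> nat \<Rightarrow> real^2^2" where
  "matpow A 0 = mat 1"
| "matpow A (Suc k) = A ** matpow A k"

definition NT :: "real^2^2 \<Rightarrow> real^2 \<Rightarrow> (real^2) set" where
  "NT A b = {x. \<forall>k::nat. b \<bullet> ((matpow A k) *v x) > 0}"

end

theory Submission
  imports Defs
begin

text \<open>
  Eigenvectors for the distinct eigenvalues l1 and l2 form a basis of
  the plane, so every x is a*v1 + c*v2 and then
    b \<bullet> (A^k x) = a*l1^k*(b\<bullet>v1) + c*l2^k*(b\<bullet>v2).
  If c \<noteq> 0, the second term dominates for large k because l1 < |l2|, and since
  l2 < 0 its sign alternates; so some iterate leaves the guard and x \<notin> NT.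
  Hence c = 0, and k = 0 forces a > 0.  Conversely every positive multiple of v1
  stays in the guard forever.
\<close>

lemma matpow_eigenvector:
  assumes "A *v v = l *\<^sub>R v"
  shows "matpow A k *v v = (l ^ k) *\<^sub>R v"
proof (induction k)
  case 0
  then show ?case by simp
next
  case (Suc k)
  have "matpow A (Suc k) *v v = A *v (matpow A k *v v)"
    by (simp add: matrix_vector_mul_assoc)
  also have "\<dots> = (l ^ k) *\<^sub>R (A *v v)"
    using Suc by (simp add: matrix_vector_mult_scaleR)
  also have "\<dots> = (l ^ Suc k) *\<^sub>R v"
    using assms by simp
  finally show ?case .
qed

lemma guard_on_eigencombination:
  assumes "A *v v1 = l1 *\<^sub>R v1" and "A *v v2 = l2 *\<^sub>R v2"
  shows "b \<bullet> (matpow A k *v (a *\<^sub>R v1 + c *\<^sub>R v2))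
      = a * l1 ^ k * (b \<bullet> v1) + c * l2 ^ k * (b \<bullet> v2)"
  by (simp add: matrix_vector_right_distrib matrix_vector_mult_scaleR inner_add_right
      matpow_eigenvector[OF assms(1)] matpow_eigenvector[OF assms(2)])

lemma eigenvector_not_in_span:
  fixes A :: "real^'n^'n"
  assumes "A *v v1 = l1 *\<^sub>R v1" and "A *v v2 = l2 *\<^sub>R v2"
    and "v2 \<noteq> 0" and "l1 \<noteq> l2"
  shows "v2 \<notin> span {v1}"
proof
  assume "v2 \<in> span {v1}"
  then obtain t where t: "v2 = t *\<^sub>R v1"
    by (auto simp: span_singleton)
  have "l2 *\<^sub>R v2 = t *\<^sub>R (A *v v1)"
    using assms(2) by (simp add: t matrix_vector_mult_scaleR)
  also have "\<dots> = l1 *\<^sub>R v2"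
    using assms(1) t by simp
  finally have "l2 *\<^sub>R v2 = l1 *\<^sub>R v2" .
  with assms(3) have "l1 = l2"
    by simp
  with assms(4) show False ..
qed

lemma plane_decomposition:
  fixes v1 v2 x :: "real^2"
  assumes "v1 \<noteq> 0" and "v2 \<notin> span {v1}"
  shows "\<exists>a c. x = a *\<^sub>R v1 + c *\<^sub>R v2"
proof -
  have ne: "v2 \<noteq> v1"
    using assms(2) span_base by fastforce
  have "independent {v2, v1}"
    using assms by (simp add: independent_insert ne)
  then have "UNIV \<subseteq> span {v2, v1}"
    using card_eq_dim[of "{v2, v1}" UNIV] ne by simp
  then have "x \<in> span (insert v2 {v1})"
    by blast
  then obtain c where "x - c *\<^sub>R v2 \<in> span {v1}"
    unfolding span_insert by blast
  then obtain a where "x - c *\<^sub>R v2 = a *\<^sub>R v1"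
    unfolding span_singleton by blast
  then have "x = a *\<^sub>R v1 + c *\<^sub>R v2"
    by (metis diff_add_cancel)
  then show ?thesis
    by blast
qed

lemma eventually_power_dominates:
  fixes l m M :: real
  assumes "0 < l" and "l < m"
  shows "\<exists>n. \<forall>k\<ge>n. M * l ^ k < m ^ k"
proof -
  define r where "r = m / l"
  have "1 < r"
    unfolding r_def using assms by simp
  then obtain n where n: "M < r ^ n"
    using real_arch_pow by blast
  have "M * l ^ k < m ^ k" if "k \<ge> n" for k
  proof -
    have "r ^ n \<le> r ^ k"
      using \<open>1 < r\<close> that by (simp add: power_increasing)
    with n have "M < r ^ k"
      by linarith
    then have "M * l ^ k < r ^ k * l ^ k"
      using assms(1) by simp
    also have "\<dots> = m ^ k"
      using assms(1) by (simp add: r_def power_divide)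
    finally show ?thesis .
  qed
  then show ?thesis
    by blast
qed

text \<open>Powers of a negative number alternate in sign, so beyond any index some
  term of c*l^k is negative.\<close>
lemma negative_power_term:
  fixes l c :: real
  assumes "l < 0" and "c \<noteq> 0"
  shows "\<exists>k\<ge>n. c * l ^ k < 0"
proof (cases "c * l ^ n < 0")
  case True
  then show ?thesis by blast
next
  case False
  with assms have "c * l ^ n > 0"
    by (simp add: linorder_not_less order_le_less)
  then have "l * (c * l ^ n) < 0"
    using mult_neg_pos[OF assms(1)] by blast
  then have "c * l ^ Suc n < 0"
    by (simp add: mult.left_commute)
  then show ?thesis
    by (intro exI[of _ "Suc n"]) simp
qed

lemma dominant_negative_term:
  fixes l1 l2 p q a c :: real
  assumes "0 < l1" and "l2 < 0" and "l1 < \<bar>l2\<bar>"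
    and "p > 0" and "q > 0" and "c \<noteq> 0"
  shows "\<exists>k. a * l1 ^ k * p + c * l2 ^ k * q \<le> 0"
proof -
  obtain n where n: "\<And>k. k \<ge> n \<Longrightarrow> \<bar>a\<bar> * p / (\<bar>c\<bar> * q) * l1 ^ k < \<bar>l2\<bar> ^ k"
    using eventually_power_dominates[OF assms(1,3)] by blast
  obtain k where "k \<ge> n" and neg: "c * l2 ^ k < 0"
    using negative_power_term[OF assms(2,6)] by blast
  have "\<bar>a\<bar> * p * l1 ^ k < \<bar>c\<bar> * q * \<bar>l2\<bar> ^ k"
    using n[OF \<open>k \<ge> n\<close>] assms(4-6) by (simp add: field_simps)
  moreover have "a * l1 ^ k * p \<le> \<bar>a\<bar> * p * l1 ^ k"
    using assms(1,4) by (simp add: mult.commute mult_right_mono)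
  moreover have "\<bar>c * l2 ^ k\<bar> = \<bar>c\<bar> * \<bar>l2\<bar> ^ k"
    by (simp add: abs_mult power_abs)
  with neg have "c * l2 ^ k = - (\<bar>c\<bar> * \<bar>l2\<bar> ^ k)"
    by linarith
  then have "c * l2 ^ k * q = - (\<bar>c\<bar> * q * \<bar>l2\<bar> ^ k)"
    by simp
  ultimately show ?thesis
    by (intro exI[of _ k]) linarith
qed

theorem lemma10:
  fixes A :: "real^2^2" and b :: "real^2" and l1 l2 :: real and v1 v2 :: "real^2"
  assumes "l1 > 0" and "l2 < 0" and "l1 < \<bar>l2\<bar>"
    and "v1 \<noteq> 0" and "A *v v1 = l1 *\<^sub>R v1"
    and "v2 \<noteq> 0" and "A *v v2 = l2 *\<^sub>R v2"
    and "b \<bullet> v1 > 0" and "b \<bullet> v2 > 0"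
  shows "NT A b = {c *\<^sub>R v1 | c. c > 0}"
proof -
  have decomp: "\<exists>a c. x = a *\<^sub>R v1 + c *\<^sub>R v2" for x
    using assms(1,2) by (intro plane_decomposition[OF assms(4)]
        eigenvector_not_in_span[OF assms(5,7,6)]) simp
  note guard = guard_on_eigencombination[OF assms(5,7)]
  show ?thesis
  proof (intro set_eqI iffI)
    fix x
    assume "x \<in> NT A b"
    then have pos: "\<And>k. b \<bullet> (matpow A k *v x) > 0"
      by (simp add: NT_def)
    obtain a c where x: "x = a *\<^sub>R v1 + c *\<^sub>R v2"
      using decomp by blast
    have "c = 0"
      using dominant_negative_term[OF assms(1-3,8,9), of c a] pos
      by (metis guard x linorder_not_less)
    moreover have "a > 0"
      using pos[of 0] assms(8) \<open>c = 0\<close> by (simp add: x guard zero_less_mult_iff)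
    ultimately show "x \<in> {c *\<^sub>R v1 | c. c > 0}"
      using x by auto
  next
    fix x
    assume "x \<in> {c *\<^sub>R v1 | c. c > 0}"
    then obtain a where "a > 0" and x: "x = a *\<^sub>R v1 + 0 *\<^sub>R v2"
      by auto
    have "b \<bullet> (matpow A k *v x) = a * l1 ^ k * (b \<bullet> v1)" for k
      using guard[where k = k and a = a and c = 0] by (simp add: x)
    with \<open>a > 0\<close> assms(1,8) show "x \<in> NT A b"
      by (simp add: NT_def)
  qed
qed

end
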